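(* Let $n\ge2$ and let $\{X_i\}_{i\in I}$ be an exhausting family of finite fully characteristic based covers of $R_n$, corresponding to subgroups $K_i=\pi_1(X_i)\le F_n$. Let $\phi\in\mathrm{End}(F_n)$ with $\phi\ne\mathrm{id}_{F_n}$. Then for some $i\in I$ the endomorphism of $H_1(X_i,\mathbb{Z})$ induced by $\phi$ is not the identity.
   Context: $F_n$ is the free group of rank $n\ge2$, identified with $\pi_1(R_n,* )$ where $R_n$ is the wedge of $n$ circles. A subgroup $K\le F_n$ is fully characteristic if $\phi(K)\subseteq K$ for all $\phi\in\mathrm{End}(F_n)$. A finite fully characteristic based cover is the connected covering $(X,x_1)\to(R_n,* )$ corresponding to a finite-index fully characteristic subgroup $K$. The family is exhausting if every $1\ne w\in F_n$ has nontrivial image in some quotient $F_n/K_i$ (i.e. $\bigcap_i K_i=\{1\}$). The endomorphism of $H_1(X_i,\mathbb{Z})\cong K_i^{ab}$ induced by $\phi$ is the abelianization of $\phi|_{K_i}$. *)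

theory Defs
  imports "HOL-Algebra.Algebra"
begin

text \<open>Free group F_n of rank n, modelled by freely reduced words.
  A letter (i, True) is the generator x_i, (i, False) is its inverse.\<close>

type_synonym gen = "nat \<times> bool"

definition cancels :: "gen \<Rightarrow> gen \<Rightarrow> bool" where
  "cancels x y \<longleftrightarrow> fst x = fst y \<and> snd x \<noteq> snd y"

fun red :: "gen list \<Rightarrow> gen list" where
  "red [] = []"
| "red (x # xs) = (case red xs of [] \<Rightarrow> [x]
                     | y # ys \<Rightarrow> (if cancels x y then ys else x # y # ys))"

definition reduced :: "gen list \<Rightarrow> bool" where
  "reduced w \<longleftrightarrow> (\<forall>i. Suc i < length w \<longrightarrow> \<not> cancels (w ! i) (w ! Suc i))"

definition free_group :: "nat \<Rightarrow> gen list monoid" where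
  "free_group n = \<lparr>carrier = {w. reduced w \<and> (\<forall>x\<in>set w. fst x < n)},
                   monoid.mult = (\<lambda>a b. red (a @ b)), one = []\<rparr>"

definition fully_characteristic :: "('a, 'b) monoid_scheme \<Rightarrow> 'a set \<Rightarrow> bool" where
  "fully_characteristic G K \<longleftrightarrow> subgroup K G \<and> (\<forall>\<phi> \<in> hom G G. \<phi> ` K \<subseteq> K)"

definition finite_index :: "('a, 'b) monoid_scheme \<Rightarrow> 'a set \<Rightarrow> bool" where
  "finite_index G K \<longleftrightarrow> finite (rcosets\<^bsub>G\<^esub> K)"

definition abelianization :: "('a, 'b) monoid_scheme \<Rightarrow> 'a set monoid" where
  "abelianization G = G Mod (derived G (carrier G))"

text \<open>Endomorphism of K^ab (= H_1 of the cover) induced by phi restricted to K: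
  a coset C of [K,K] in K is sent to the coset of phi(k) for any k in C.\<close>
definition induced_ab_endo ::
  "('a, 'b) monoid_scheme \<Rightarrow> 'a set \<Rightarrow> ('a \<Rightarrow> 'a) \<Rightarrow> 'a set \<Rightarrow> 'a set" where
  "induced_ab_endo G K \<phi> =
     (let H = G\<lparr>carrier := K\<rparr>; D = derived H (carrier H)
      in (\<lambda>C \<in> carrier (abelianization H). D #>\<^bsub>H\<^esub> \<phi> (SOME k. k \<in> C)))"

end

theory Submission
  imports Defs
begin

text \<open>Suppose phi acts trivially on K^ab for a finite-index normal subgroup K. For g in F_n and
  k in K, phi(g k g^-1) = phi(g) phi(k) phi(g)^-1, so conjugation by g and by phi(g) induce the
  same automorphism of K^ab, i.e. the coset K h with h = phi(g)^-1 g acts trivially on K^ab.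
  Counting (with signs) how often a loop of the finite cover X_K runs through a given edge gives
  homomorphisms K -> Z that factor through K^ab and on which K h acts by moving the edge from
  the vertex K to the vertex K h. For n >= 2, powers of x_0 and x_1 yield a loop that crosses an
  edge at K but not the corresponding edge at K h unless K h = K. Hence phi(g) and g agree
  modulo every K_i, and an exhausting family forces phi(g) = g.\<close>

section \<open>Free reduction\<close>

definition cons_red :: "gen \<Rightarrow> gen list \<Rightarrow> gen list" where
  "cons_red x w = (case w of [] \<Rightarrow> [x] | y # ys \<Rightarrow> (if cancels x y then ys else x # y # ys))"

lemma red_Cons: "red (x # xs) = cons_red x (red xs)"
  by (simp add: cons_red_def)

declare red.simps(2)[simp del]

lemma cancels_cancels_eq: "cancels x y \<Longrightarrow> cancels y z \<Longrightarrow> x = z"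
  by (cases x; cases y; cases z) (auto simp: cancels_def)

lemma reduced_Nil [simp]: "reduced []"
  by (simp add: reduced_def)

lemma reduced_Cons: "reduced (x # w) \<longleftrightarrow> reduced w \<and> (w = [] \<or> \<not> cancels x (hd w))"
  unfolding reduced_def
proof (intro iffI conjI allI impI)
  assume r: "\<forall>i. Suc i < length (x # w) \<longrightarrow> \<not> cancels ((x # w) ! i) ((x # w) ! Suc i)"
  show "\<not> cancels (w ! i) (w ! Suc i)" if "Suc i < length w" for i
    using r[rule_format, of "Suc i"] that by simp
  show "w = [] \<or> \<not> cancels x (hd w)"
    using r[rule_format, of 0] by (cases w) auto
next
  fix i
  assume r: "(\<forall>i. Suc i < length w \<longrightarrow> \<not> cancels (w ! i) (w ! Suc i)) \<and> (w = [] \<or> \<not> cancels x (hd w))"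
    and "Suc i < length (x # w)"
  then show "\<not> cancels ((x # w) ! i) ((x # w) ! Suc i)"
    by (cases i; cases w) auto
qed

lemma reduced_cons_red: "reduced w \<Longrightarrow> reduced (cons_red x w)"
  by (cases w) (auto simp: cons_red_def reduced_Cons)

lemma reduced_red: "reduced (red w)"
  by (induction w) (auto simp: red_Cons reduced_cons_red)

lemma red_reduced: "reduced w \<Longrightarrow> red w = w"
  by (induction w) (auto simp: red_Cons cons_red_def reduced_Cons split: list.split)

lemma cons_red_cons_red_cancel: "cancels x y \<Longrightarrow> reduced w \<Longrightarrow> cons_red x (cons_red y w) = w"
  by (cases w rule: remdups_adj.cases)
    (auto simp: cons_red_def reduced_Cons dest: cancels_cancels_eq)

lemma red_append: "red (xs @ ys) = foldr cons_red xs (red ys)"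
  by (induction xs) (auto simp: red_Cons)

lemma reduced_foldr_cons_red: "reduced r \<Longrightarrow> reduced (foldr cons_red u r)"
  by (induction u) (auto simp: reduced_cons_red)

lemma foldr_cons_red_cons_red:
  assumes "reduced r"
  shows "foldr cons_red (cons_red x u) r = cons_red x (foldr cons_red u r)"
proof (cases u)
  case (Cons y u')
  then show ?thesis
    using cons_red_cons_red_cancel[of x y, OF _ reduced_foldr_cons_red[OF assms]]
    by (auto simp: cons_red_def)
qed (simp add: cons_red_def)

lemma foldr_cons_red_red: "reduced r \<Longrightarrow> foldr cons_red (red xs) r = foldr cons_red xs r"
  by (induction xs) (auto simp: red_Cons foldr_cons_red_cons_red)

lemma red_red_append [simp]: "red (red a @ b) = red (a @ b)"
  by (simp add: red_append foldr_cons_red_red reduced_red)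

lemma red_red [simp]: "red (red a) = red a"
  by (simp add: red_reduced reduced_red)

lemma red_append_red [simp]: "red (a @ red b) = red (a @ b)"
  by (simp add: red_append)

lemma red_cancel: "cancels x y \<Longrightarrow> red (s @ x # y # t) = red (s @ t)"
  by (simp add: red_append red_Cons cons_red_cons_red_cancel reduced_red)

lemma set_red: "set (red w) \<subseteq> set w"
  by (induction w) (auto simp: red_Cons cons_red_def split: list.split)

section \<open>The free group\<close>

definition word_inv :: "gen list \<Rightarrow> gen list" where
  "word_inv w = rev (map (\<lambda>(i, b). (i, \<not> b)) w)"

lemma word_inv_Cons: "word_inv (x # w) = word_inv w @ [(fst x, \<not> snd x)]"
  by (cases x) (simp add: word_inv_def)

lemma word_inv_word_inv [simp]: "word_inv (word_inv w) = w"
  by (simp add: word_inv_def rev_map comp_def case_prod_beta)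

lemma word_inv_letters: "\<forall>x\<in>set w. fst x < n \<Longrightarrow> \<forall>x\<in>set (word_inv w). fst x < n"
  by (auto simp: word_inv_def)

lemma red_word_inv_append: "red (word_inv w @ w) = []"
proof (induction w)
  case (Cons x w)
  have "red (word_inv (x # w) @ x # w) = red (word_inv w @ (fst x, \<not> snd x) # x # w)"
    by (simp add: word_inv_Cons)
  also have "\<dots> = red (word_inv w @ w)"
    by (rule red_cancel) (simp add: cancels_def)
  finally show ?case using Cons by simp
qed (simp add: word_inv_def)

lemma red_append_word_inv: "red (w @ word_inv w) = []"
  using red_word_inv_append[of "word_inv w"] by simp

lemma carrier_free_group: "w \<in> carrier (free_group n) \<longleftrightarrow> reduced w \<and> (\<forall>x\<in>set w. fst x < n)"
  by (simp add: free_group_def)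

lemma mult_free_group: "a \<otimes>\<^bsub>free_group n\<^esub> b = red (a @ b)"
  by (simp add: free_group_def)

lemma one_free_group: "\<one>\<^bsub>free_group n\<^esub> = []"
  by (simp add: free_group_def)

lemma red_in_carrier_free_group: "\<forall>x\<in>set w. fst x < n \<Longrightarrow> red w \<in> carrier (free_group n)"
  using set_red[of w] by (auto simp: carrier_free_group reduced_red)

lemma group_free_group: "group (free_group n)"
proof (rule groupI)
  fix x y assume "x \<in> carrier (free_group n)" "y \<in> carrier (free_group n)"
  then show "x \<otimes>\<^bsub>free_group n\<^esub> y \<in> carrier (free_group n)"
    unfolding mult_free_group by (intro red_in_carrier_free_group) (auto simp: carrier_free_group)
next
  fix x assume x: "x \<in> carrier (free_group n)"
  then have "red (word_inv x) \<in> carrier (free_group n)"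
    by (intro red_in_carrier_free_group word_inv_letters) (simp add: carrier_free_group)
  then show "\<exists>y\<in>carrier (free_group n). y \<otimes>\<^bsub>free_group n\<^esub> x = \<one>\<^bsub>free_group n\<^esub>"
    by (intro bexI) (simp_all add: mult_free_group one_free_group red_word_inv_append)
qed (auto simp: mult_free_group one_free_group carrier_free_group red_reduced)

lemma inv_free_group:
  assumes "x \<in> carrier (free_group n)"
  shows "inv\<^bsub>free_group n\<^esub> x = red (word_inv x)"
proof (rule group.inv_equality[OF group_free_group])
  show "red (word_inv x) \<in> carrier (free_group n)"
    using assms by (intro red_in_carrier_free_group word_inv_letters) (simp add: carrier_free_group)
qed (use assms in \<open>simp_all add: mult_free_group one_free_group red_word_inv_append\<close>)

lemma (in group) inv_mult_cancel_left [simp]: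
  "g \<in> carrier G \<Longrightarrow> x \<in> carrier G \<Longrightarrow> inv g \<otimes> (g \<otimes> x) = x"
  by (simp add: m_assoc[symmetric])

lemma (in group) subgroup_mult_left_iff:
  assumes H: "subgroup H G" and h: "h \<in> H" and x: "x \<in> carrier G"
  shows "h \<otimes> x \<in> H \<longleftrightarrow> x \<in> H"
proof
  assume "h \<otimes> x \<in> H"
  then have "inv h \<otimes> (h \<otimes> x) \<in> H"
    using subgroup.m_closed[OF H subgroup.m_inv_closed[OF H h]] by blast
  then show "x \<in> H"
    using subgroup.mem_carrier[OF H h] x by simp
qed (use H h in \<open>rule subgroup.m_closed\<close>)

lemma (in normal) conj_mem_iff:
  assumes g: "g \<in> carrier G" and x: "x \<in> carrier G"
  shows "g \<otimes> x \<otimes> inv g \<in> H \<longleftrightarrow> x \<in> H"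
proof
  assume "g \<otimes> x \<otimes> inv g \<in> H"
  then have "inv g \<otimes> (g \<otimes> x \<otimes> inv g) \<otimes> inv (inv g) \<in> H"
    using inv_op_closed2[of "inv g"] g by blast
  then show "x \<in> H"
    using g x by (simp add: m_assoc)
qed (use g inv_op_closed2 in blast)

lemma (in group) conjugation_hom: "x \<in> carrier G \<Longrightarrow> (\<lambda>y. x \<otimes> y \<otimes> inv x) \<in> hom G G"
  by (rule homI) (simp_all add: m_assoc inv_solve_left)

lemma (in group) fully_characteristic_imp_normal:
  assumes "fully_characteristic G K"
  shows "K \<lhd> G"
proof -
  have "(\<lambda>y. x \<otimes> y \<otimes> inv x) ` K \<subseteq> K" if "x \<in> carrier G" for x
    using assms conjugation_hom[OF that] by (simp add: fully_characteristic_def)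
  then show ?thesis
    using assms unfolding fully_characteristic_def normal_inv_iff by blast
qed

lemma (in group) hom_integer_group_derived:
  assumes f: "f \<in> hom G integer_group" and d: "d \<in> derived G (carrier G)"
  shows "f d = 0"
proof -
  interpret group_hom G integer_group f
    using f by (simp add: group_hom_def group_hom_axioms_def is_group)
  have "f ` derived G (carrier G) = {0}"
    using derived_img[of "carrier G"] comm_group.derived_eq_singleton[OF abelian_integer_group]
    by simp
  then show ?thesis using d by blast
qed

lemma (in group) hom_integer_group_rcos_derived:
  assumes f: "f \<in> hom G integer_group" and y: "y \<in> carrier G"
    and x: "x \<in> derived G (carrier G) #> y"
  shows "f x = f y"
proof -
  obtain d where d: "d \<in> derived G (carrier G)" "x = d \<otimes> y"
    using x unfolding r_coset_def by blast
  then have "f x = f d + f y"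
    using f y derived_in_carrier[of "carrier G"] by (auto simp: hom_mult)
  then show ?thesis using hom_integer_group_derived[OF f d(1)] by simp
qed

lemma (in group) induced_ab_endo_id_imp_hom_integer_group_invariant:
  assumes sub: "subgroup K G" and \<phi>: "\<phi> \<in> hom G G" "\<phi> ` K \<subseteq> K"
    and id: "induced_ab_endo G K \<phi> = (\<lambda>C \<in> carrier (abelianization (G\<lparr>carrier := K\<rparr>)). C)"
    and f: "f \<in> hom (G\<lparr>carrier := K\<rparr>) integer_group" and k: "k \<in> K"
  shows "f (\<phi> k) = f k"
proof -
  let ?H = "G\<lparr>carrier := K\<rparr>"
  define D where "D = derived ?H (carrier ?H)"
  interpret H: group ?H by (rule subgroup_imp_group[OF sub])
  have D: "subgroup D ?H" unfolding D_def by (rule H.derived_is_subgroup) simp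
  have f\<phi>: "(\<lambda>x. f (\<phi> x)) \<in> hom ?H integer_group"
  proof (rule homI)
    fix x y assume "x \<in> carrier ?H" "y \<in> carrier ?H"
    then show "f (\<phi> (x \<otimes>\<^bsub>?H\<^esub> y)) = f (\<phi> x) \<otimes>\<^bsub>integer_group\<^esub> f (\<phi> y)"
      using \<phi> hom_mult[OF f, of "\<phi> x" "\<phi> y"] subgroup.mem_carrier[OF sub]
      by (auto simp: hom_mult)
  qed simp
  define C where "C = D #>\<^bsub>?H\<^esub> k"
  have C: "C \<in> carrier (abelianization ?H)"
    using H.rcosetsI[OF subgroup.subset[OF D], of k] k
    unfolding abelianization_def FactGroup_def C_def D_def by simp
  have "k \<in> C" unfolding C_def using H.rcos_self[OF _ D] k by simp
  then have k': "(SOME x. x \<in> C) \<in> C" by (rule someI)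
  moreover have "C \<subseteq> K"
    unfolding C_def using H.r_coset_subset_G[OF subgroup.subset[OF D], of k] k by simp
  ultimately have "\<phi> (SOME x. x \<in> C) \<in> D #>\<^bsub>?H\<^esub> \<phi> (SOME x. x \<in> C)"
    using H.rcos_self[OF _ D] \<phi>(2) by auto
  also have "\<dots> = C"
    using fun_cong[OF id, of C] C by (simp add: induced_ab_endo_def Let_def D_def)
  finally have "f (\<phi> (SOME x. x \<in> C)) = f k"
    using H.hom_integer_group_rcos_derived[OF f] k unfolding C_def D_def by simp
  moreover have "f (\<phi> (SOME x. x \<in> C)) = f (\<phi> k)"
    using H.hom_integer_group_rcos_derived[OF f\<phi>] k k' unfolding C_def D_def by simp
  ultimately show ?thesis by simp
qed

definition same_coset :: "gen list set \<Rightarrow> gen list \<Rightarrow> gen list \<Rightarrow> bool" where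
  "same_coset K a b \<longleftrightarrow> red (a @ word_inv b) \<in> K"

lemma same_coset_red [simp]: "same_coset K (red s) c = same_coset K s c"
  by (simp add: same_coset_def)

section \<open>Edge counts in the Schreier graph\<close>

text \<open>The vertices of the Schreier graph of K (the 1-skeleton of the cover belonging to K) are
  the cosets K g. edge_count K c j s w is the signed number of times the path spelled by w,
  starting at the vertex K s, runs through the edge labelled x_j that leaves the vertex K c.\<close>

fun edge_count :: "gen list set \<Rightarrow> gen list \<Rightarrow> nat \<Rightarrow> gen list \<Rightarrow> gen list \<Rightarrow> int" where
  "edge_count K c j s [] = 0"
| "edge_count K c j s (x # w) =
     (if x = (j, True) \<and> same_coset K s c then 1 else 0)
   - (if x = (j, False) \<and> same_coset K (red (s @ [x])) c then 1 else 0)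
   + edge_count K c j (red (s @ [x])) w"

lemma edge_count_cong:
  assumes "set w \<subseteq> A"
    and "\<And>p. set p \<subseteq> A \<Longrightarrow> same_coset K (red (s @ p)) c \<longleftrightarrow> same_coset K' (red (s' @ p)) c'"
  shows "edge_count K c j s w = edge_count K' c' j s' w"
  using assms
proof (induction w arbitrary: s s')
  case (Cons x w)
  have "edge_count K c j (red (s @ [x])) w = edge_count K' c' j (red (s' @ [x])) w"
    using Cons.prems by (intro Cons.IH) (auto dest!: Cons.prems(2)[of "x # _"])
  then show ?case
    using Cons.prems(1) Cons.prems(2)[of "[]"] Cons.prems(2)[of "[x]"] by simp
qed simp

lemma edge_count_red_state: "edge_count K c j (red s) w = edge_count K c j s w"
  by (rule edge_count_cong[where A = UNIV]) simp_all

lemma edge_count_cons_red: "edge_count K c j s (cons_red x u) = edge_count K c j s (x # u)"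
proof (cases u)
  case (Cons y u')
  show ?thesis
  proof (cases "cancels x y")
    case True
    have return: "red (red (s @ [x]) @ [y]) = red s"
      using red_cancel[OF True, of s "[]"] by simp
    have "edge_count K c j s (x # y # u') = edge_count K c j (red s) u'"
      using True return by (cases x; cases y) (auto simp: cancels_def)
    then show ?thesis
      using Cons True by (simp add: cons_red_def edge_count_red_state)
  qed (simp add: Cons cons_red_def)
qed (simp add: cons_red_def)

lemma edge_count_red: "edge_count K c j s (red w) = edge_count K c j s w"
  by (induction w arbitrary: s) (simp_all add: red_Cons edge_count_cons_red)

lemma edge_count_append:
  "edge_count K c j s (a @ b) = edge_count K c j s a + edge_count K c j (red (s @ a)) b"
  by (induction a arbitrary: s) (simp_all add: edge_count_red_state)

lemma edge_count_other_letters: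
  "\<forall>x\<in>set w. fst x \<noteq> j \<Longrightarrow> edge_count K c j s w = 0"
  by (induction w arbitrary: s) auto

locale free_normal_subgroup =
  fixes n :: nat and K :: "gen list set"
  assumes normal: "K \<lhd> free_group n"
begin

abbreviation G where "G \<equiv> free_group n"

sublocale G: group G by (rule group_free_group)

lemma subgroup: "subgroup K G"
  using normal by (rule normal_imp_subgroup)

lemma mem_carrier: "k \<in> K \<Longrightarrow> k \<in> carrier G"
  by (rule subgroup.mem_carrier[OF subgroup])

lemma Nil_mult [simp]: "a \<in> carrier G \<Longrightarrow> [] \<otimes>\<^bsub>G\<^esub> a = a"
  using G.l_one by (simp add: one_free_group)

lemma mult_Nil [simp]: "a \<in> carrier G \<Longrightarrow> a \<otimes>\<^bsub>G\<^esub> [] = a"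
  using G.r_one by (simp add: one_free_group)

lemma inv_Nil [simp]: "inv\<^bsub>G\<^esub> [] = []"
  using G.inv_one by (simp add: one_free_group)

lemma Nil_carrier [simp]: "[] \<in> carrier G"
  by (simp add: carrier_free_group)

lemma Nil_mem [simp]: "[] \<in> K"
  using subgroup.one_closed[OF subgroup] by (simp add: one_free_group)

lemma same_coset_iff:
  "a \<in> carrier G \<Longrightarrow> b \<in> carrier G \<Longrightarrow> same_coset K a b \<longleftrightarrow> a \<otimes>\<^bsub>G\<^esub> inv\<^bsub>G\<^esub> b \<in> K"
  by (simp add: same_coset_def inv_free_group mult_free_group)

lemma same_coset_red_append:
  assumes "a \<in> carrier G" "c \<in> carrier G" "\<forall>x\<in>set p. fst x < n"
  shows "same_coset K (red (a @ p)) c \<longleftrightarrow> a \<otimes>\<^bsub>G\<^esub> red p \<otimes>\<^bsub>G\<^esub> inv\<^bsub>G\<^esub> c \<in> K"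
proof -
  have "red (a @ p) = a \<otimes>\<^bsub>G\<^esub> red p" by (simp add: mult_free_group)
  then show ?thesis
    using assms red_in_carrier_free_group[OF assms(3)] same_coset_iff by simp
qed

lemma edge_count_state_cong:
  assumes s: "s \<in> carrier G" "s' \<in> carrier G" "s \<otimes>\<^bsub>G\<^esub> inv\<^bsub>G\<^esub> s' \<in> K"
    and c: "c \<in> carrier G" and w: "\<forall>x\<in>set w. fst x < n"
  shows "edge_count K c j s w = edge_count K c j s' w"
proof (rule edge_count_cong[where A = "{x. fst x < n}"])
  fix p :: "gen list" assume "set p \<subseteq> {x. fst x < n}"
  then have p: "\<forall>x\<in>set p. fst x < n" by auto
  have "s \<otimes>\<^bsub>G\<^esub> red p \<otimes>\<^bsub>G\<^esub> inv\<^bsub>G\<^esub> c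
      = (s \<otimes>\<^bsub>G\<^esub> inv\<^bsub>G\<^esub> s') \<otimes>\<^bsub>G\<^esub> (s' \<otimes>\<^bsub>G\<^esub> red p \<otimes>\<^bsub>G\<^esub> inv\<^bsub>G\<^esub> c)"
    using s c red_in_carrier_free_group[OF p] by (simp add: G.m_assoc G.inv_solve_left)
  then show "same_coset K (red (s @ p)) c \<longleftrightarrow> same_coset K (red (s' @ p)) c"
    using same_coset_red_append[OF _ c p] s c red_in_carrier_free_group[OF p]
      G.subgroup_mult_left_iff[OF subgroup s(3)] by simp
qed (use w in auto)

lemma red_carrier: "a \<in> carrier G \<Longrightarrow> red a = a"
  by (simp add: carrier_free_group red_reduced)

lemma edge_count_hom:
  assumes c: "c \<in> carrier G"
  shows "edge_count K c j [] \<in> hom (G\<lparr>carrier := K\<rparr>) integer_group"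
proof (rule homI)
  fix a b assume "a \<in> carrier (G\<lparr>carrier := K\<rparr>)" "b \<in> carrier (G\<lparr>carrier := K\<rparr>)"
  then have ab: "a \<in> K" "b \<in> K" by simp_all
  have "edge_count K c j a b = edge_count K c j [] b"
    using ab mem_carrier c by (intro edge_count_state_cong) (simp_all add: carrier_free_group)
  then show "edge_count K c j [] (a \<otimes>\<^bsub>G\<lparr>carrier := K\<rparr>\<^esub> b)
      = edge_count K c j [] a \<otimes>\<^bsub>integer_group\<^esub> edge_count K c j [] b"
    using edge_count_append[of K c j "[]" a b] red_carrier[OF mem_carrier[OF ab(1)]]
    by (simp add: mult_free_group edge_count_red)
qed simp

lemma edge_count_translate:
  assumes s: "s \<in> carrier G" and c: "c \<in> carrier G" and w: "\<forall>x\<in>set w. fst x < n"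
  shows "edge_count K c j s w = edge_count K (inv\<^bsub>G\<^esub> s \<otimes>\<^bsub>G\<^esub> c) j [] w"
proof (rule edge_count_cong[where A = "{x. fst x < n}"])
  fix p :: "gen list" assume "set p \<subseteq> {x. fst x < n}"
  then have p: "\<forall>x\<in>set p. fst x < n" by auto
  note q = red_in_carrier_free_group[OF p]
  have "s \<otimes>\<^bsub>G\<^esub> (red p \<otimes>\<^bsub>G\<^esub> inv\<^bsub>G\<^esub> (inv\<^bsub>G\<^esub> s \<otimes>\<^bsub>G\<^esub> c)) \<otimes>\<^bsub>G\<^esub> inv\<^bsub>G\<^esub> s
      = s \<otimes>\<^bsub>G\<^esub> red p \<otimes>\<^bsub>G\<^esub> inv\<^bsub>G\<^esub> c"
    using s c q by (simp add: G.m_assoc G.inv_mult_group)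
  then show "same_coset K (red (s @ p)) c \<longleftrightarrow> same_coset K (red ([] @ p)) (inv\<^bsub>G\<^esub> s \<otimes>\<^bsub>G\<^esub> c)"
    using same_coset_red_append[OF s c p]
      same_coset_red_append[OF Nil_carrier _ p, of "inv\<^bsub>G\<^esub> s \<otimes>\<^bsub>G\<^esub> c"] s c q
      normal.conj_mem_iff[OF normal s, of "red p \<otimes>\<^bsub>G\<^esub> inv\<^bsub>G\<^esub> (inv\<^bsub>G\<^esub> s \<otimes>\<^bsub>G\<^esub> c)"]
    by simp
qed (use w in auto)

lemma edge_count_conj:
  assumes g: "g \<in> carrier G" and k: "k \<in> K" and c: "c \<in> carrier G"
  shows "edge_count K c j [] (g \<otimes>\<^bsub>G\<^esub> k \<otimes>\<^bsub>G\<^esub> inv\<^bsub>G\<^esub> g) = edge_count K c j g k"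
proof -
  have kc: "k \<in> carrier G" using mem_carrier[OF k] .
  have ginv: "\<forall>x\<in>set (word_inv g). fst x < n"
    using g by (intro word_inv_letters) (simp add: carrier_free_group)
  have "edge_count K c j (g \<otimes>\<^bsub>G\<^esub> k) (word_inv g) = edge_count K c j g (word_inv g)"
    using g kc c ginv normal.inv_op_closed2[OF normal g k]
    by (intro edge_count_state_cong) simp_all
  moreover have "edge_count K c j [] g + edge_count K c j g (word_inv g) = 0"
    using edge_count_append[of K c j "[]" g "word_inv g"] red_carrier[OF g]
      edge_count_red[of K c j "[]" "g @ word_inv g"] by (simp add: red_append_word_inv)
  moreover have "g \<otimes>\<^bsub>G\<^esub> k \<otimes>\<^bsub>G\<^esub> inv\<^bsub>G\<^esub> g = red (g @ k @ word_inv g)"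
    using g by (simp add: inv_free_group mult_free_group)
  ultimately show ?thesis
    using edge_count_red[of K c j "[]" "g @ k @ word_inv g"] red_carrier[OF g]
      edge_count_append[of K c j "[]" g "k @ word_inv g"] edge_count_append[of K c j g k "word_inv g"]
    by (simp add: mult_free_group)
qed

end

section \<open>Separating cosets by edge counts\<close>

definition gen_pow :: "nat \<Rightarrow> nat \<Rightarrow> gen list" where
  "gen_pow j t = replicate t (j, True)"

lemma gen_pow_0 [simp]: "gen_pow j 0 = []"
  by (simp add: gen_pow_def)

lemma reduced_gen_pow: "reduced (gen_pow j t)"
  by (simp add: gen_pow_def reduced_def cancels_def)

lemma red_gen_pow_append: "red (gen_pow j a @ gen_pow j b) = gen_pow j (a + b)"
  using reduced_gen_pow[of j "a + b"] by (simp add: gen_pow_def replicate_add red_reduced)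

lemma edge_count_gen_pow:
  "edge_count K c j (gen_pow j u) (gen_pow j t)
     = (\<Sum>v\<in>{u..<u + t}. if same_coset K (gen_pow j v) c then 1 else 0)"
proof (induction t arbitrary: u)
  case (Suc t)
  have "red (gen_pow j u @ [(j, True)]) = gen_pow j (Suc u)"
    using red_gen_pow_append[of j u 1] by (simp add: gen_pow_def)
  then show ?case
    using Suc.IH[of "Suc u"] by (simp add: sum.atLeast_Suc_lessThan gen_pow_def)
qed simp

lemma edge_count_gen_pow_append:
  assumes "\<forall>x\<in>set y. fst x \<noteq> j"
  shows "edge_count K c j [] (red (gen_pow j a @ y))
     = (\<Sum>v<a. if same_coset K (gen_pow j v) c then 1 else 0)"
  using edge_count_gen_pow[of K c j 0 a] edge_count_other_letters[OF assms]
  by (simp add: edge_count_red edge_count_append atLeast0LessThan)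

context free_normal_subgroup
begin

lemma gen_pow_carrier: "j < n \<Longrightarrow> gen_pow j t \<in> carrier G"
  using reduced_gen_pow[of j t] by (simp add: carrier_free_group gen_pow_def)

lemma gen_pow_mult: "gen_pow j a \<otimes>\<^bsub>G\<^esub> gen_pow j b = gen_pow j (a + b)"
  by (simp add: mult_free_group red_gen_pow_append)

lemma gen_pow_div:
  assumes "j < n" "v \<le> a"
  shows "gen_pow j a \<otimes>\<^bsub>G\<^esub> inv\<^bsub>G\<^esub> gen_pow j v = gen_pow j (a - v)"
  using G.inv_solve_right'[of "gen_pow j (a - v)" "gen_pow j a" "gen_pow j v"]
    gen_pow_mult[of j "a - v" v] gen_pow_carrier[OF assms(1)] assms(2)
  by simp

lemma same_coset_iff_rcos:
  assumes a: "a \<in> carrier G" and b: "b \<in> carrier G"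
  shows "same_coset K a b \<longleftrightarrow> K #>\<^bsub>G\<^esub> a = K #>\<^bsub>G\<^esub> b"
proof -
  have "same_coset K a b \<longleftrightarrow> a \<in> K #>\<^bsub>G\<^esub> b"
    using same_coset_iff[OF a b] subgroup.rcos_module[OF subgroup G.is_group b a] by simp
  also have "\<dots> \<longleftrightarrow> K #>\<^bsub>G\<^esub> a = K #>\<^bsub>G\<^esub> b"
    using G.repr_independence[OF _ b subgroup, of a] G.repr_independenceD[OF subgroup a, of b]
    by auto
  finally show ?thesis .
qed

lemma same_coset_Nil_iff: "a \<in> carrier G \<Longrightarrow> same_coset K a [] \<longleftrightarrow> a \<in> K"
  using same_coset_iff[of a "[]"] by simp

lemma gen_pow_power_in_subgroup:
  assumes fin: "finite (rcosets\<^bsub>G\<^esub> K)" and j: "j < n"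
  shows "\<exists>m>0. gen_pow j m \<in> K"
proof -
  define N where "N = card (rcosets\<^bsub>G\<^esub> K)"
  define f where "f t = K #>\<^bsub>G\<^esub> gen_pow j t" for t
  have "f ` {0..N} \<subseteq> rcosets\<^bsub>G\<^esub> K"
    using G.rcosetsI[OF subgroup.subset[OF subgroup] gen_pow_carrier[OF j]] by (auto simp: f_def)
  then have "card (f ` {0..N}) < card {0..N}"
    using card_mono[OF fin] unfolding N_def by (simp add: less_Suc_eq_le)
  then have "\<not> inj_on f {0..N}"
    by (rule pigeonhole)
  then obtain a b where "a \<noteq> b" "f a = f b"
    unfolding inj_on_def by blast
  then obtain a b where ab: "a < b" "f a = f b"
    by (metis linorder_neqE_nat)
  then have "gen_pow j (b - a) \<in> K"
    using same_coset_iff_rcos[OF gen_pow_carrier[OF j] gen_pow_carrier[OF j], of b a]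
      same_coset_iff[OF gen_pow_carrier[OF j] gen_pow_carrier[OF j]] gen_pow_div[OF j, of a b]
    by (simp add: f_def)
  then show ?thesis using ab(1) by (intro exI[of _ "b - a"]) simp
qed

lemma same_coset_Nil_left_iff: "h \<in> carrier G \<Longrightarrow> same_coset K [] h \<longleftrightarrow> h \<in> K"
  using same_coset_iff_rcos[of "[]" h] same_coset_iff_rcos[of h "[]"] same_coset_Nil_iff[of h]
  by auto

lemma first_return:
  assumes fin: "finite (rcosets\<^bsub>G\<^esub> K)" and j: "j < n" and h: "h \<in> carrier G" "h \<notin> K"
  obtains a where "0 < a" "gen_pow j a \<in> K \<or> same_coset K (gen_pow j a) h"
    "\<forall>v<a. \<not> same_coset K (gen_pow j v) h" "\<forall>v. 0 < v \<longrightarrow> v < a \<longrightarrow> gen_pow j v \<notin> K"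
proof -
  define P where "P t \<longleftrightarrow> 0 < t \<and> (gen_pow j t \<in> K \<or> same_coset K (gen_pow j t) h)" for t
  define a where "a = (LEAST t. P t)"
  obtain m where "P m" using gen_pow_power_in_subgroup[OF fin j] by (auto simp: P_def)
  then have "P a" unfolding a_def by (rule LeastI)
  have below: "\<not> P v" if "v < a" for v
    using not_less_Least[OF that[unfolded a_def]] .
  have "\<not> same_coset K (gen_pow j 0) h"
    using same_coset_Nil_left_iff[OF h(1)] h(2) by simp
  with below have "\<not> same_coset K (gen_pow j v) h" if "v < a" for v
    using that by (cases "v = 0") (auto simp: P_def)
  with \<open>P a\<close> below show thesis
    by (intro that[of a]) (auto simp: P_def)
qed

lemma edge_count_first_return:
  assumes "0 < a" "\<forall>v<a. \<not> same_coset K (gen_pow j v) h"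
    "\<forall>v. 0 < v \<longrightarrow> v < a \<longrightarrow> gen_pow j v \<notin> K" and j: "j < n" and y: "\<forall>x\<in>set y. fst x \<noteq> j"
  shows "edge_count K [] j [] (red (gen_pow j a @ y)) = 1"
    and "edge_count K h j [] (red (gen_pow j a @ y)) = 0"
proof -
  have "(\<Sum>v<a. if same_coset K (gen_pow j v) [] then 1 else 0) = (\<Sum>v<a. if v = 0 then 1 else (0::int))"
    using assms(3) same_coset_Nil_iff[OF gen_pow_carrier[OF j]] by (intro sum.cong) auto
  then show "edge_count K [] j [] (red (gen_pow j a @ y)) = 1"
    using edge_count_gen_pow_append[OF y] assms(1) by simp
  show "edge_count K h j [] (red (gen_pow j a @ y)) = 0"
    using edge_count_gen_pow_append[OF y] assms(2) by simp
qed

lemma edge_count_separates_cosets: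
  assumes fin: "finite (rcosets\<^bsub>G\<^esub> K)" and n: "2 \<le> n" and h: "h \<in> carrier G" "h \<notin> K"
  shows "\<exists>k\<in>K. \<exists>j. edge_count K [] j [] k \<noteq> edge_count K h j [] k"
proof -
  have n01: "0 < n" "1 < n" using n by auto
  obtain a where a: "0 < a" "gen_pow 0 a \<in> K \<or> same_coset K (gen_pow 0 a) h"
    "\<forall>v<a. \<not> same_coset K (gen_pow 0 v) h" "\<forall>v. 0 < v \<longrightarrow> v < a \<longrightarrow> gen_pow 0 v \<notin> K"
    by (rule first_return[OF fin n01(1) h])
  obtain b where b: "0 < b" "gen_pow 1 b \<in> K \<or> same_coset K (gen_pow 1 b) h"
    "\<forall>v<b. \<not> same_coset K (gen_pow 1 v) h" "\<forall>v. 0 < v \<longrightarrow> v < b \<longrightarrow> gen_pow 1 v \<notin> K"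
    by (rule first_return[OF fin n01(2) h])
  have carrier: "gen_pow 0 a \<in> carrier G" "gen_pow 1 b \<in> carrier G"
    using n01 by (simp_all add: gen_pow_carrier)
  have sep0: "edge_count K [] 0 [] (red (gen_pow 0 a @ y)) \<noteq> edge_count K h 0 [] (red (gen_pow 0 a @ y))"
    if "\<forall>x\<in>set y. fst x \<noteq> 0" for y
    using edge_count_first_return[OF a(1,3,4) _ that] n by simp
  have sep1: "edge_count K [] 1 [] (gen_pow 1 b) \<noteq> edge_count K h 1 [] (gen_pow 1 b)"
    using edge_count_first_return[OF b(1,3,4), of "[]"] n red_carrier[OF carrier(2)] by simp
  consider "gen_pow 0 a \<in> K" | "gen_pow 1 b \<in> K"
    | "same_coset K (gen_pow 0 a) h" "same_coset K (gen_pow 1 b) h"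
    using a(2) b(2) by blast
  then show ?thesis
  proof cases
    case 1
    with sep0[of "[]"] show ?thesis using red_carrier[OF carrier(1)] by auto
  next
    case 2
    with sep1 show ?thesis by blast
  next
    case 3
    \<comment> \<open>Both powers lead from K to K h, so out along x_0 and back along x_1 is a loop.\<close>
    have "K #>\<^bsub>G\<^esub> gen_pow 0 a = K #>\<^bsub>G\<^esub> gen_pow 1 b"
      using 3 carrier h(1) same_coset_iff_rcos by simp
    then have "gen_pow 0 a \<otimes>\<^bsub>G\<^esub> inv\<^bsub>G\<^esub> gen_pow 1 b \<in> K"
      using same_coset_iff_rcos[OF carrier] same_coset_iff[OF carrier] by simp
    moreover have "gen_pow 0 a \<otimes>\<^bsub>G\<^esub> inv\<^bsub>G\<^esub> gen_pow 1 b = red (gen_pow 0 a @ word_inv (gen_pow 1 b))"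
      using carrier by (simp add: inv_free_group mult_free_group)
    moreover have "\<forall>x\<in>set (word_inv (gen_pow 1 b)). fst x \<noteq> 0"
      by (simp add: word_inv_def gen_pow_def)
    ultimately show ?thesis using sep0 by metis
  qed
qed

lemma induced_ab_endo_id_imp_inv_mult_mem:
  assumes fin: "finite (rcosets\<^bsub>G\<^esub> K)" and n: "2 \<le> n"
    and \<phi>: "\<phi> \<in> hom G G" "\<phi> ` K \<subseteq> K"
    and id: "induced_ab_endo G K \<phi> = (\<lambda>C \<in> carrier (abelianization (G\<lparr>carrier := K\<rparr>)). C)"
    and g: "g \<in> carrier G"
  shows "inv\<^bsub>G\<^esub> \<phi> g \<otimes>\<^bsub>G\<^esub> g \<in> K"
proof (rule ccontr)
  interpret \<phi>: group_hom G G \<phi>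
    using \<phi>(1) by (simp add: group_hom_def group_hom_axioms_def G.is_group)
  have invariant: "edge_count K c j [] (\<phi> k) = edge_count K c j [] k"
    if "k \<in> K" "c \<in> carrier G" for k c j
    using G.induced_ab_endo_id_imp_hom_integer_group_invariant[OF subgroup \<phi> id edge_count_hom]
      that by blast
  define h where "h = inv\<^bsub>G\<^esub> \<phi> g \<otimes>\<^bsub>G\<^esub> g"
  assume "h \<notin> K"
  moreover have h: "h \<in> carrier G" using g by (simp add: h_def)
  ultimately obtain k j where k: "k \<in> K" "edge_count K [] j [] k \<noteq> edge_count K h j [] k"
    using edge_count_separates_cosets[OF fin n] by blast
  have kc: "k \<in> carrier G" "\<phi> k \<in> K" using mem_carrier k \<phi>(2) by auto
  have conj: "g \<otimes>\<^bsub>G\<^esub> k \<otimes>\<^bsub>G\<^esub> inv\<^bsub>G\<^esub> g \<in> K"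
    using normal.inv_op_closed2[OF normal g k(1)] .
  \<comment> \<open>Conjugation by g moves the count from the vertex K to K g; conjugation by phi g
    moves it back, but to the vertex K h.\<close>
  have "edge_count K [] j [] k = edge_count K g j g k"
    using edge_count_translate[OF g g, of k j] g kc(1) by (simp add: carrier_free_group one_free_group)
  also have "\<dots> = edge_count K g j [] (\<phi> (g \<otimes>\<^bsub>G\<^esub> k \<otimes>\<^bsub>G\<^esub> inv\<^bsub>G\<^esub> g))"
    using edge_count_conj[OF g k(1) g] invariant[OF conj g] by simp
  also have "\<dots> = edge_count K g j [] (\<phi> g \<otimes>\<^bsub>G\<^esub> \<phi> k \<otimes>\<^bsub>G\<^esub> inv\<^bsub>G\<^esub> \<phi> g)"
    using g kc(1) by simp
  also have "\<dots> = edge_count K g j (\<phi> g) (\<phi> k)"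
    using edge_count_conj[OF \<phi>.hom_closed[OF g] kc(2) g] .
  also have "\<dots> = edge_count K h j [] (\<phi> k)"
    using edge_count_translate[OF \<phi>.hom_closed[OF g] g, of "\<phi> k" j] mem_carrier[OF kc(2)]
    by (simp add: h_def carrier_free_group)
  also have "\<dots> = edge_count K h j [] k"
    using invariant[OF k(1) h] .
  finally show False using k(2) by simp
qed

end

theorem mainTheorem8:
  fixes n :: nat and I :: "'i set" and K :: "'i \<Rightarrow> gen list set"
    and \<phi> :: "gen list \<Rightarrow> gen list"
  assumes "n \<ge> 2"
    and "\<forall>i\<in>I. fully_characteristic (free_group n) (K i) \<and> finite_index (free_group n) (K i)"
    and "(\<Inter>i\<in>I. K i) = {\<one>\<^bsub>free_group n\<^esub>}"
    and "\<phi> \<in> hom (free_group n) (free_group n)"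
    and "\<exists>w\<in>carrier (free_group n). \<phi> w \<noteq> w"
  shows "\<exists>i\<in>I. induced_ab_endo (free_group n) (K i) \<phi>
              \<noteq> (\<lambda>C \<in> carrier (abelianization ((free_group n)\<lparr>carrier := K i\<rparr>)). C)"
proof (rule ccontr)
  interpret G: group "free_group n" by (rule group_free_group)
  assume trivial: "\<not> ?thesis"
  obtain w where w: "w \<in> carrier (free_group n)" "\<phi> w \<noteq> w" using assms(5) by blast
  have "inv\<^bsub>free_group n\<^esub> \<phi> w \<otimes>\<^bsub>free_group n\<^esub> w \<in> K i" if i: "i \<in> I" for i
  proof -
    have fc: "fully_characteristic (free_group n) (K i)" "finite_index (free_group n) (K i)"
      using assms(2) i by auto
    interpret free_normal_subgroup n "K i"
      by (rule free_normal_subgroup.intro) (rule G.fully_characteristic_imp_normal[OF fc(1)])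
    have "\<phi> ` K i \<subseteq> K i"
      using fc(1) assms(4) unfolding fully_characteristic_def by blast
    moreover have "finite (rcosets\<^bsub>free_group n\<^esub> K i)"
      using fc(2) unfolding finite_index_def .
    ultimately show ?thesis
      using induced_ab_endo_id_imp_inv_mult_mem[OF _ assms(1,4) _ _ w(1)] trivial i by blast
  qed
  then have "inv\<^bsub>free_group n\<^esub> \<phi> w \<otimes>\<^bsub>free_group n\<^esub> w = \<one>\<^bsub>free_group n\<^esub>"
    using assms(3) by blast
  then show False
    using G.inv_solve_left'[of "\<one>\<^bsub>free_group n\<^esub>" "\<phi> w" w] hom_in_carrier[OF assms(4) w(1)] w
    by simp
qed

end
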